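(* Let $h:[0,\infty)\to[0,\infty)$ satisfy $h(0)=0$ and be concave, and suppose that either $h(t)/t\not\to\infty$ as $t\to0^+$, or $h(t)/t\not\to0$ as $t\to\infty$. Then there exists an infinite metric space $(X,d)$ such that $(X,h\circ d)$ admits an isometric embedding into the $2$-dimensional Euclidean space $\mathbb R^2$. *)

theory Defs
  imports "HOL-Analysis.Analysis"
begin

end

theory Submission
  imports Defs
begin

text \<open>
Put points p_n = r_n e^(i \<phi>_n) in the plane with directions \<phi>_n = 1 - 2^-n and radii that grow
or decay so fast that in every triple p_i, p_j, p_k (i < j < k) one extreme point P lies far away
from the other two, A and B. The difference |P - A| - |P - B| is essentially the projection of
B - A onto the direction of P, and the directions of A and P make an angle bounded away from 0,
so ||P - A| - |P - B|| \<le> \<tau> |A - B| for some \<tau> < 1.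

Now take d(m, n) = g |p_m - p_n| for a right inverse g of h. If h t / t is bounded near 0,
h is almost linear with slope h'(0) on small scales; if h t / t stays away from 0 at infinity,
h is almost linear with its asymptotic slope on large scales. Choosing the radii on the matching
scale, near-linearity gives g a \<le> g b + g c whenever a - b \<le> \<tau> c, which is exactly the triangle
inequality for d. If h 1 = 0 then h vanishes on the values of the discrete metric.
\<close>

section \<open>Metric spaces from planar point sequences\<close>

definition transform_embeds_in_plane :: "(real \<Rightarrow> real) \<Rightarrow> bool" where
  "transform_embeds_in_plane h \<longleftrightarrow>
     (\<exists>(X :: nat set) (d :: nat \<Rightarrow> nat \<Rightarrow> real).
        infinite X \<and> Metric_space X d \<and>
        (\<exists>f :: nat \<Rightarrow> real^2. \<forall>x\<in>X. \<forall>y\<in>X. dist (f x) (f y) = h (d x y)))"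

definition vec_of_complex :: "complex \<Rightarrow> real^2" where
  "vec_of_complex z = vector [Re z, Im z]"

lemma dist_vec_of_complex: "dist (vec_of_complex z) (vec_of_complex w) = cmod (z - w)"
  unfolding dist_norm norm_vec_def L2_set_def vec_of_complex_def
  by (simp add: sum_2 cmod_def power2_eq_square)

lemma Metric_space_of_sorted_triangles:
  fixes G :: "nat \<Rightarrow> nat \<Rightarrow> real"
  assumes sym: "\<And>m n. G m n = G n m"
    and pos: "\<And>m n. m \<noteq> n \<Longrightarrow> 0 < G m n"
    and tri: "\<And>i j k. i < j \<Longrightarrow> j < k \<Longrightarrow>
      G i k \<le> G i j + G j k \<and> G i j \<le> G i k + G j k \<and> G j k \<le> G i j + G i k"
  shows "Metric_space UNIV (\<lambda>m n. if m = n then 0 else G m n)"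
proof
  fix x y z :: nat
  show "0 \<le> (if x = y then 0 else G x y)" using pos by (simp add: less_imp_le)
  show "(if x = y then 0 else G x y) = (if y = x then 0 else G y x)" using sym by simp
  show "((if x = y then 0 else G x y) = 0) = (x = y)" using pos by force
  have "G x z \<le> G x y + G y z" if "x \<noteq> y" "y \<noteq> z" "x \<noteq> z"
  proof -
    have "x < y \<and> y < z \<or> x < z \<and> z < y \<or> y < x \<and> x < z \<or>
          y < z \<and> z < x \<or> z < x \<and> x < y \<or> z < y \<and> y < x"
      using that by arith
    then show ?thesis
      using tri[of x y z] tri[of x z y] tri[of y x z] tri[of y z x] tri[of z x y] tri[of z y x]
        sym[of x y] sym[of y z] sym[of x z] by auto
  qed
  then show "(if x = z then 0 else G x z)
      \<le> (if x = y then 0 else G x y) + (if y = z then 0 else G y z)"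
    using pos by (auto simp: less_imp_le)
qed

lemma transform_embeds_in_planeI:
  fixes p :: "nat \<Rightarrow> complex" and g :: "real \<Rightarrow> real"
  defines "G \<equiv> \<lambda>m n. g (cmod (p m - p n))"
  assumes "h 0 = 0"
    and inverse: "\<And>m n. m \<noteq> n \<Longrightarrow> 0 < G m n \<and> h (G m n) = cmod (p m - p n)"
    and tri: "\<And>i j k. i < j \<Longrightarrow> j < k \<Longrightarrow>
      G i k \<le> G i j + G j k \<and> G i j \<le> G i k + G j k \<and> G j k \<le> G i j + G i k"
  shows "transform_embeds_in_plane h"
proof -
  define d where "d m n = (if m = n then 0 else G m n)" for m n
  have "Metric_space UNIV d"
    unfolding d_def using inverse tri
    by (intro Metric_space_of_sorted_triangles) (auto simp: G_def norm_minus_commute)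
  moreover have "dist (vec_of_complex (p x)) (vec_of_complex (p y)) = h (d x y)" for x y
    using inverse[of x y] \<open>h 0 = 0\<close> by (simp add: d_def dist_vec_of_complex)
  ultimately show ?thesis
    unfolding transform_embeds_in_plane_def
    by (intro exI[of _ UNIV] exI[of _ d] conjI exI[of _ "vec_of_complex \<circ> p"]) auto
qed

lemma transform_embeds_in_plane_degenerate:
  assumes "h 0 = 0" and "h 1 = 0"
  shows "transform_embeds_in_plane h"
proof -
  define d :: "nat \<Rightarrow> nat \<Rightarrow> real" where "d x y = (if x = y then 0 else 1)" for x y
  have "Metric_space UNIV d"
    unfolding d_def by (intro Metric_space_of_sorted_triangles) auto
  moreover have "dist (0 :: real^2) 0 = h (d x y)" for x y
    using assms by (simp add: d_def)
  ultimately show ?thesis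
    unfolding transform_embeds_in_plane_def by (intro exI[of _ UNIV] exI[of _ d]) auto
qed

section \<open>Spiral configurations\<close>

text \<open>
Direction n makes an angle between 2^-(n+1) and 1 with every later direction, so arg_gap_cos n
bounds the cosine of that angle; radius_ratio n is the admissible ratio of radii in a triple
with smallest index n, and dist_defect n < 1 is the resulting factor \<tau> above.
\<close>

definition spiral_arg :: "nat \<Rightarrow> real" where
  "spiral_arg n = 1 - (1/2)^n"

definition arg_gap_cos :: "nat \<Rightarrow> real" where
  "arg_gap_cos n = cos ((1/2)^Suc n)"

definition radius_ratio :: "nat \<Rightarrow> real" where
  "radius_ratio n = (1 - arg_gap_cos n) / 8"

definition dist_defect :: "nat \<Rightarrow> real" where
  "dist_defect n = (arg_gap_cos n + 2 * radius_ratio n) / (1 - radius_ratio n)^2"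

definition spiral_point :: "(nat \<Rightarrow> real) \<Rightarrow> nat \<Rightarrow> complex" where
  "spiral_point r n = complex_of_real (r n) * cis (spiral_arg n)"

lemma arg_gap_cos_pos: "0 < arg_gap_cos n"
  unfolding arg_gap_cos_def using power_le_one[of "1/2::real" "Suc n"] pi_gt3
  by (intro cos_gt_zero) auto

lemma arg_gap_cos_less_1: "arg_gap_cos n < 1"
  using power_le_one[of "1/2::real" "Suc n"] pi_gt3
    cos_monotone_0_pi[of 0 "(1/2::real)^Suc n"]
  unfolding arg_gap_cos_def by simp

lemma radius_ratio_pos: "0 < radius_ratio n"
  unfolding radius_ratio_def using arg_gap_cos_less_1[of n] by simp

lemma radius_ratio_le: "radius_ratio n \<le> 1/8"
  unfolding radius_ratio_def using arg_gap_cos_pos[of n] by simp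

lemma radius_ratio_antimono:
  assumes "m \<le> n"
  shows "radius_ratio n \<le> radius_ratio m"
proof (rule lift_Suc_antimono_le[of radius_ratio, OF _ assms])
  fix k
  have "cos ((1/2::real)^Suc k) \<le> cos ((1/2)^Suc (Suc k))"
    using power_le_one[of "1/2::real" "Suc k"] pi_gt3 by (intro cos_monotone_0_pi_le) auto
  then show "radius_ratio (Suc k) \<le> radius_ratio k"
    unfolding radius_ratio_def arg_gap_cos_def by simp
qed

lemma dist_defect_pos: "0 < dist_defect n"
  unfolding dist_defect_def
  using arg_gap_cos_pos[of n] radius_ratio_pos[of n] radius_ratio_le[of n] by simp

lemma dist_defect_less_1: "dist_defect n < 1"
proof -
  define e where "e = 1 - arg_gap_cos n"
  have e: "0 < e" "e \<le> 1" unfolding e_def using arg_gap_cos_less_1[of n] arg_gap_cos_pos[of n] by auto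
  have "arg_gap_cos n + 2 * radius_ratio n = 1 - 3 * e / 4"
    unfolding radius_ratio_def e_def by (simp add: field_simps)
  also have "\<dots> < (1 - e / 8)^2"
  proof -
    have "0 < e / 2 + e * e / 64" using e by (simp add: add_pos_nonneg)
    then show ?thesis by (simp add: power2_eq_square algebra_simps)
  qed
  also have "\<dots> = (1 - radius_ratio n)^2" unfolding radius_ratio_def e_def ..
  finally show ?thesis
    unfolding dist_defect_def using radius_ratio_le[of n] by simp
qed

lemma abs_cos_spiral_arg_diff_le:
  assumes "m \<noteq> n"
  shows "\<bar>cos (spiral_arg m - spiral_arg n)\<bar> \<le> arg_gap_cos (min m n)"
proof -
  define a b where "a = min m n" and "b = max m n"
  define x where "x = (1/2::real)^a - (1/2)^b"
  have "a < b" using assms unfolding a_def b_def by auto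
  have "spiral_arg m - spiral_arg n = x \<or> spiral_arg m - spiral_arg n = - x"
    unfolding x_def a_def b_def spiral_arg_def by (cases "m \<le> n") (simp_all add: max_def min_def)
  then have "cos (spiral_arg m - spiral_arg n) = cos x" by auto
  have "(1/2::real)^b \<le> (1/2)^Suc a" using \<open>a < b\<close> by (intro power_decreasing) auto
  moreover have "(1/2::real)^a \<le> 1" "0 \<le> (1/2::real)^b" by (simp_all add: power_le_one)
  ultimately have x: "(1/2::real)^Suc a \<le> x" "x \<le> 1" unfolding x_def by (simp, linarith)
  have "0 < x" using x(1) zero_less_power[of "1/2::real" "Suc a"] by linarith
  then have "0 < cos x" using x(2) pi_gt3 by (intro cos_gt_zero) auto
  moreover have "cos x \<le> arg_gap_cos a"
    unfolding arg_gap_cos_def using x pi_gt3 by (intro cos_monotone_0_pi_le) auto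
  ultimately show ?thesis using \<open>cos (spiral_arg m - spiral_arg n) = cos x\<close> a_def by simp
qed

lemma norm_spiral_point: "0 \<le> r n \<Longrightarrow> cmod (spiral_point r n) = r n"
  unfolding spiral_point_def by (simp add: norm_mult)

lemma Re_spiral_point_mult_cnj:
  "Re (spiral_point r m * cnj (spiral_point r n)) = r m * r n * cos (spiral_arg m - spiral_arg n)"
  unfolding spiral_point_def by (simp add: cos_diff algebra_simps)

lemma spiral_point_dist_bounds:
  assumes "0 \<le> r m" "0 \<le> r n"
  shows "\<bar>r m - r n\<bar> \<le> cmod (spiral_point r m - spiral_point r n)"
    and "cmod (spiral_point r m - spiral_point r n) \<le> r m + r n"
  using norm_triangle_ineq3[of "spiral_point r m" "spiral_point r n"]
    norm_triangle_ineq4[of "spiral_point r m" "spiral_point r n"]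
  by (simp_all add: norm_spiral_point assms)

lemma cmod_diff_power2: "(cmod (P - A))^2 = (cmod P)^2 + (cmod A)^2 - 2 * Re (A * cnj P)"
  by (simp only: cmod_power2) (simp add: power2_eq_square algebra_simps)

lemma far_point_coefficient_le:
  fixes R \<rho> \<epsilon> c :: real
  assumes "\<rho> \<le> \<epsilon> * R" "0 < \<epsilon>" "\<epsilon> \<le> 1/8" "0 \<le> c" "0 \<le> R"
  shows "(\<rho> + 2 * (c + \<epsilon>) * R) * (1 - \<epsilon>) \<le> 2 * (R - \<rho>) * (c + 2 * \<epsilon>)"
proof -
  have "\<rho> * (2 * c + 3 * \<epsilon> + 1) \<le> \<epsilon> * R * (2 * c + 3 * \<epsilon> + 1)"
    using assms by (intro mult_right_mono) auto
  moreover have "0 \<le> \<epsilon> * R * (1 - \<epsilon>)" using assms by simp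
  moreover have "2 * (R - \<rho>) * (c + 2 * \<epsilon>) - (\<rho> + 2 * (c + \<epsilon>) * R) * (1 - \<epsilon>)
      = \<epsilon> * R * (2 * c + 3 * \<epsilon> + 1) - \<rho> * (2 * c + 3 * \<epsilon> + 1) + \<epsilon> * R * (1 - \<epsilon>)"
    by algebra
  ultimately show ?thesis by linarith
qed

lemma abs_dist_power2_diff_le:
  fixes P A B :: complex
  assumes B: "cmod B \<le> \<epsilon> * cmod A" and "0 \<le> \<epsilon>" "\<epsilon> \<le> 1"
    and angle: "\<bar>Re (A * cnj P)\<bar> \<le> c * cmod A * cmod P"
  shows "\<bar>(cmod (P - A))^2 - (cmod (P - B))^2\<bar> \<le> cmod A * (cmod A + 2 * (c + \<epsilon>) * cmod P)"
proof -
  have "cmod B \<le> cmod A" using B assms(2,3) mult_right_mono[of \<epsilon> 1 "cmod A"] by simp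
  then have "(cmod B)^2 \<le> (cmod A)^2" by (simp add: power_mono)
  moreover have "\<bar>Re (B * cnj P)\<bar> \<le> \<epsilon> * cmod A * cmod P"
    using abs_Re_le_cmod[of "B * cnj P"] mult_right_mono[OF B, of "cmod P"] by (simp add: norm_mult)
  moreover have "(cmod (P - A))^2 - (cmod (P - B))^2
      = (cmod A)^2 - (cmod B)^2 - 2 * Re (A * cnj P) + 2 * Re (B * cnj P)"
    unfolding cmod_diff_power2 by simp
  ultimately have "\<bar>(cmod (P - A))^2 - (cmod (P - B))^2\<bar>
      \<le> (cmod A)^2 + 2 * (c * cmod A * cmod P) + 2 * (\<epsilon> * cmod A * cmod P)"
    using angle zero_le_power2[of "cmod B"] by (simp only: abs_le_iff) linarith
  also have "\<dots> = cmod A * (cmod A + 2 * (c + \<epsilon>) * cmod P)" by algebra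
  finally show ?thesis .
qed

lemma far_point_dist_diff_le:
  fixes P A B :: complex
  assumes A: "cmod A \<le> \<epsilon> * cmod P" and B: "cmod B \<le> \<epsilon> * cmod A"
    and \<epsilon>: "0 < \<epsilon>" "\<epsilon> \<le> 1/8" and c: "0 \<le> c"
    and angle: "\<bar>Re (A * cnj P)\<bar> \<le> c * cmod A * cmod P" and "A \<noteq> 0"
  shows "\<bar>cmod (P - A) - cmod (P - B)\<bar> \<le> (c + 2 * \<epsilon>) / (1 - \<epsilon>)^2 * cmod (A - B)"
    and "cmod (A - B) \<le> cmod (P - A)" and "cmod (A - B) \<le> cmod (P - B)"
proof -
  define R \<rho> x y where "R = cmod P" and "\<rho> = cmod A" and "x = cmod (P - A)" and "y = cmod (P - B)"
  have "0 < \<rho>" using \<open>A \<noteq> 0\<close> by (simp add: \<rho>_def)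
  have "\<rho> \<le> R / 8" using A \<epsilon> mult_right_mono[of \<epsilon> "1/8" R] by (simp add: R_def \<rho>_def)
  have "cmod B \<le> \<rho>" using B \<epsilon> mult_right_mono[of \<epsilon> 1 "cmod A"] by (simp add: \<rho>_def)
  have AB: "(1 - \<epsilon>) * \<rho> \<le> cmod (A - B)" "cmod (A - B) \<le> 2 * \<rho>"
    using norm_triangle_ineq2[of A B] norm_triangle_ineq4[of A B] B \<open>cmod B \<le> \<rho>\<close>
    by (simp_all add: \<rho>_def algebra_simps)
  have xy: "R - \<rho> \<le> x" "R - \<rho> \<le> y"
    using norm_triangle_ineq2[of P A] norm_triangle_ineq2[of P B] \<open>cmod B \<le> \<rho>\<close>
    by (simp_all add: R_def \<rho>_def x_def y_def)
  then show "cmod (A - B) \<le> cmod (P - A)" "cmod (A - B) \<le> cmod (P - B)"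
    using AB(2) \<open>\<rho> \<le> R / 8\<close> \<open>0 < \<rho>\<close> by (simp_all add: x_def y_def)
  \<comment> \<open>x + y \<ge> 2 (R - \<rho>) turns the bound on x^2 - y^2 into one on x - y\<close>
  have "(x + y) * \<bar>x - y\<bar> \<le> \<rho> * (\<rho> + 2 * (c + \<epsilon>) * R)"
    using abs_dist_power2_diff_le[OF B _ _ angle] \<epsilon>
    by (simp add: R_def \<rho>_def x_def y_def abs_mult power2_eq_square square_diff_square_factored)
  also have "\<dots> \<le> \<rho> * (2 * (R - \<rho>) * (c + 2 * \<epsilon>) / (1 - \<epsilon>))"
    using far_point_coefficient_le[of \<rho> \<epsilon> R c] A \<epsilon> c \<open>0 < \<rho>\<close> \<open>\<rho> \<le> R / 8\<close>
    by (intro mult_left_mono) (simp_all add: pos_le_divide_eq R_def \<rho>_def)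
  also have "\<dots> = 2 * (R - \<rho>) * ((c + 2 * \<epsilon>) / (1 - \<epsilon>) * \<rho>)" by simp
  finally have "(x + y) * \<bar>x - y\<bar> \<le> 2 * (R - \<rho>) * ((c + 2 * \<epsilon>) / (1 - \<epsilon>) * \<rho>)" .
  moreover have "2 * (R - \<rho>) * \<bar>x - y\<bar> \<le> (x + y) * \<bar>x - y\<bar>"
    using xy by (intro mult_right_mono) auto
  ultimately have "2 * (R - \<rho>) * \<bar>x - y\<bar> \<le> 2 * (R - \<rho>) * ((c + 2 * \<epsilon>) / (1 - \<epsilon>) * \<rho>)"
    by linarith
  moreover have "0 < 2 * (R - \<rho>)" using \<open>\<rho> \<le> R / 8\<close> \<open>0 < \<rho>\<close> by simp
  ultimately have "\<bar>x - y\<bar> \<le> (c + 2 * \<epsilon>) / (1 - \<epsilon>) * \<rho>"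
    by (simp only: mult_le_cancel_left_pos)
  also have "\<dots> = (c + 2 * \<epsilon>) / (1 - \<epsilon>)^2 * ((1 - \<epsilon>) * \<rho>)"
    using \<epsilon> by (simp add: power2_eq_square)
  also have "\<dots> \<le> (c + 2 * \<epsilon>) / (1 - \<epsilon>)^2 * cmod (A - B)"
    using AB(1) c \<epsilon> by (intro mult_left_mono) auto
  finally show "\<bar>cmod (P - A) - cmod (P - B)\<bar> \<le> (c + 2 * \<epsilon>) / (1 - \<epsilon>)^2 * cmod (A - B)"
    by (simp add: x_def y_def)
qed

lemma spiral_point_triple:
  assumes pos: "\<And>n. 0 < r n" and "a \<noteq> p"
    and small: "r s \<le> radius_ratio (min a p) * r a"
    and middle: "r a \<le> radius_ratio (min a p) * r p"
  defines "D \<equiv> \<lambda>m n. cmod (spiral_point r m - spiral_point r n)"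
  shows "\<bar>D p a - D p s\<bar> \<le> dist_defect (min a p) * D a s"
    and "D a s \<le> D p a" and "D a s \<le> D p s"
proof -
  have norm: "cmod (spiral_point r n) = r n" for n by (simp add: norm_spiral_point less_imp_le pos)
  have "\<bar>Re (spiral_point r a * cnj (spiral_point r p))\<bar>
      = r a * r p * \<bar>cos (spiral_arg a - spiral_arg p)\<bar>"
    unfolding Re_spiral_point_mult_cnj using pos[of a] pos[of p] by (simp add: abs_mult)
  also have "\<dots> \<le> arg_gap_cos (min a p) * r a * r p"
    using abs_cos_spiral_arg_diff_le[OF \<open>a \<noteq> p\<close>] pos[of a] pos[of p]
    by (simp add: mult_left_mono mult.commute)
  finally have angle: "\<bar>Re (spiral_point r a * cnj (spiral_point r p))\<bar>
      \<le> arg_gap_cos (min a p) * r a * r p" .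
  have "spiral_point r a \<noteq> 0" using norm[of a] pos[of a] by auto
  note far = far_point_dist_diff_le[of "spiral_point r a" "radius_ratio (min a p)"
      "spiral_point r p" "spiral_point r s" "arg_gap_cos (min a p)",
      unfolded norm, OF middle small radius_ratio_pos radius_ratio_le
      less_imp_le[OF arg_gap_cos_pos] angle \<open>spiral_point r a \<noteq> 0\<close>]
  show "\<bar>D p a - D p s\<bar> \<le> dist_defect (min a p) * D a s" "D a s \<le> D p a" "D a s \<le> D p s"
    using far unfolding D_def dist_defect_def by simp_all
qed

lemma radius_gap_of_increasing:
  assumes pos: "\<And>n. 0 < r n" and step: "\<And>n. r n \<le> radius_ratio (Suc n) * r (Suc n)"
    and "m < n"
  shows "r m \<le> radius_ratio n * r n"
proof -
  have "r k \<le> r (Suc k)" for k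
    using step[of k] radius_ratio_le[of "Suc k"] pos[of "Suc k"]
      mult_right_mono[of "radius_ratio (Suc k)" 1 "r (Suc k)"] by linarith
  then have "r m \<le> r (n - 1)" using lift_Suc_mono_le[of r] \<open>m < n\<close> by simp
  also have "\<dots> \<le> radius_ratio n * r n" using step[of "n - 1"] \<open>m < n\<close> by simp
  finally show ?thesis .
qed

lemma radius_gap_of_decreasing:
  assumes pos: "\<And>n. 0 < r n" and step: "\<And>n. r (Suc n) \<le> radius_ratio n * r n"
    and "m < n"
  shows "r n \<le> radius_ratio m * r m"
proof -
  have "r (Suc k) \<le> r k" for k
    using step[of k] radius_ratio_le[of k] pos[of k]
      mult_right_mono[of "radius_ratio k" 1 "r k"] by linarith
  then have "r n \<le> r (Suc m)" using lift_Suc_antimono_le[of r] \<open>m < n\<close> by simp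
  also have "\<dots> \<le> radius_ratio m * r m" by (rule step)
  finally show ?thesis .
qed

lemma ex_increasing_radii:
  fixes b :: "nat \<Rightarrow> real"
  obtains r where "\<And>n. 0 < r n" and "\<And>n. r n \<le> radius_ratio (Suc n) * r (Suc n)"
    and "\<And>n. b n \<le> r n"
proof
  define r where "r = rec_nat (max 1 (b 0)) (\<lambda>n x. max (x / radius_ratio (Suc n)) (b (Suc n)))"
  have r_Suc: "r (Suc n) = max (r n / radius_ratio (Suc n)) (b (Suc n))" for n
    by (simp add: r_def)
  show pos: "0 < r n" for n
    using radius_ratio_pos by (induction n) (auto simp: r_def less_max_iff_disj)
  show "r n \<le> radius_ratio (Suc n) * r (Suc n)" for n
  proof -
    have "r n = radius_ratio (Suc n) * (r n / radius_ratio (Suc n))"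
      using radius_ratio_pos[of "Suc n"] by simp
    also have "\<dots> \<le> radius_ratio (Suc n) * r (Suc n)"
      unfolding r_Suc using radius_ratio_pos[of "Suc n"] by (intro mult_left_mono) auto
    finally show ?thesis .
  qed
  show "b n \<le> r n" for n by (cases n) (simp_all add: r_def)
qed

lemma ex_decreasing_radii:
  fixes b :: "nat \<Rightarrow> real"
  assumes "\<And>n. 0 < b n"
  obtains r where "\<And>n. 0 < r n" and "\<And>n. r (Suc n) \<le> radius_ratio n * r n"
    and "\<And>n. r n \<le> b n"
proof
  define r where "r = rec_nat (b 0) (\<lambda>n x. min (radius_ratio n * x) (b (Suc n)))"
  show "0 < r n" for n
    using radius_ratio_pos assms by (induction n) (auto simp: r_def)
  show "r (Suc n) \<le> radius_ratio n * r n" for n by (simp add: r_def)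
  show "r n \<le> b n" for n by (cases n) (simp_all add: r_def)
qed

lemma spiral_point_dist_of_decreasing:
  assumes pos: "\<And>n. 0 < r n" and step: "\<And>n. r (Suc n) \<le> radius_ratio n * r n" and "m < n"
  shows "0 < cmod (spiral_point r m - spiral_point r n)"
    and "cmod (spiral_point r m - spiral_point r n) \<le> 2 * r m"
proof -
  have "r n \<le> r m / 8"
    using radius_gap_of_decreasing[OF pos step \<open>m < n\<close>] radius_ratio_le[of m] pos[of m]
      mult_right_mono[of "radius_ratio m" "1/8" "r m"] by linarith
  moreover have "r m - r n \<le> cmod (spiral_point r m - spiral_point r n)"
    and "cmod (spiral_point r m - spiral_point r n) \<le> r m + r n"
    using spiral_point_dist_bounds[of r m n] pos[of m] pos[of n] by simp_all
  ultimately show "0 < cmod (spiral_point r m - spiral_point r n)"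
    and "cmod (spiral_point r m - spiral_point r n) \<le> 2 * r m"
    using pos[of n] by linarith+
qed

lemma spiral_point_dist_of_increasing:
  assumes pos: "\<And>n. 0 < r n" and step: "\<And>n. r n \<le> radius_ratio (Suc n) * r (Suc n)"
    and "m < n"
  shows "r n / 2 \<le> cmod (spiral_point r m - spiral_point r n)"
proof -
  have "r m \<le> r n / 8"
    using radius_gap_of_increasing[OF pos step \<open>m < n\<close>] radius_ratio_le[of n] pos[of n]
      mult_right_mono[of "radius_ratio n" "1/8" "r n"] by linarith
  then show ?thesis using spiral_point_dist_bounds(1)[of r m n] pos[of m] pos[of n] by simp
qed

section \<open>Nonnegative concave functions\<close>

lemma inv_into_mono_on:
  fixes f :: "'a::linorder \<Rightarrow> 'b::linorder"
  assumes "mono_on A f" "x \<in> f ` A" "y \<in> f ` A" "x \<le> y"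
  shows "inv_into A f x \<le> inv_into A f y"
proof (rule ccontr)
  assume less: "\<not> inv_into A f x \<le> inv_into A f y"
  then have "f (inv_into A f y) \<le> f (inv_into A f x)"
    using assms by (intro mono_onD[OF assms(1)]) (auto intro: inv_into_into)
  then have "x = y" using assms by (simp add: f_inv_into_f)
  then show False using less by simp
qed

lemma concave_on_chord_le:
  fixes h :: "real \<Rightarrow> real"
  assumes "concave_on S h" "a \<in> S" "c \<in> S" "a < b" "b < c"
  shows "h a + (b - a) / (c - a) * (h c - h a) \<le> h b"
proof -
  define t where "t = (b - a) / (c - a)"
  have t: "0 \<le> t" "t \<le> 1" unfolding t_def using assms by (auto simp: divide_simps)
  have "t * (c - a) = b - a" unfolding t_def using assms by simp
  then have "(1 - t) * a + t * c = b" by (simp add: algebra_simps)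
  then have "(1 - t) * h a + t * h c \<le> h b"
    using concave_onD[OF assms(1) t assms(2,3)] by simp
  then have "h a + t * (h c - h a) \<le> h b" by (simp add: algebra_simps)
  then show ?thesis by (simp add: t_def)
qed

context
  fixes h :: "real \<Rightarrow> real"
  assumes nonneg: "\<And>t. 0 \<le> t \<Longrightarrow> 0 \<le> h t"
    and zero: "h 0 = 0"
    and concave: "concave_on {0..} h"
begin

lemma concave_ratio_antimono:
  assumes "0 < s" "s \<le> t"
  shows "h t / t \<le> h s / s"
proof -
  have "s / t * h t \<le> h s"
    using concave_onD[OF concave, of "s / t" 0 t] assms zero by (simp add: field_simps)
  then show ?thesis using assms by (simp add: field_simps)
qed

lemma concave_nonneg_mono:
  assumes "0 \<le> s" "s \<le> t"
  shows "h s \<le> h t"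
proof (rule ccontr)
  assume "\<not> h s \<le> h t"
  then have \<delta>: "0 < h s - h t" and "s < t" using assms by (auto simp: order.order_iff_strict)
  define u where "u = t + (t - s) * (h s / (h s - h t) + 1)"
  have "0 < (t - s) * (h s / (h s - h t) + 1)"
    using \<delta> \<open>s < t\<close> nonneg[OF assms(1)] by (simp add: add_nonneg_pos)
  then have "t < u" unfolding u_def by simp
  \<comment> \<open>extending the decreasing chord from s through t down to u forces h u < 0\<close>
  have "h s + (t - s) / (u - s) * (h u - h s) \<le> h t"
    using concave_on_chord_le[OF concave, of s u t] assms \<open>s < t\<close> \<open>t < u\<close> by simp
  then have "(t - s) * (h u - h s) \<le> (h t - h s) * (u - s)"
    using \<open>s < t\<close> \<open>t < u\<close> by (simp add: divide_simps algebra_simps)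
  also have "\<dots> = (t - s) * (- h s - 2 * (h s - h t))"
    unfolding u_def using \<delta> by (simp add: field_simps)
  finally have "h u < 0" using \<delta> \<open>s < t\<close> by (simp add: mult_le_cancel_left_pos)
  then show False using nonneg[of u] \<open>s < t\<close> \<open>t < u\<close> assms by linarith
qed

lemma concave_continuous_on_pos: "continuous_on {0<..} h"
proof -
  have "convex_on {0<..} (\<lambda>x. - h x)"
    using concave unfolding concave_on_def by (rule convex_on_subset) auto
  then have "continuous_on {0<..} (\<lambda>x. - (- h x))"
    by (intro continuous_on_minus convex_on_continuous) auto
  then show ?thesis by simp
qed

subsection \<open>Large scale\<close>

text \<open>L is the slope of h at infinity: the limit and infimum of h t / t.\<close>

context
  fixes L :: real
  assumes L_pos: "0 < L"
    and L_le_ratio: "\<And>t. 0 < t \<Longrightarrow> L * t \<le> h t"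
    and L_ratio_limit: "\<And>\<tau>. 0 < \<tau> \<Longrightarrow> \<tau> < 1 \<Longrightarrow> \<forall>\<^sub>F t in at_top. \<tau> * h t \<le> L * t"
begin

lemma increment_ge_slope_at_infinity:
  assumes "0 \<le> s" "s < t"
  shows "L * (t - s) \<le> h t - h s"
proof (rule ccontr)
  assume "\<not> L * (t - s) \<le> h t - h s"
  define m where "m = (h t - h s) / (t - s)"
  have "m < L" using \<open>\<not> L * (t - s) \<le> h t - h s\<close> assms by (simp add: m_def divide_simps)
  \<comment> \<open>the chord through s and t has slope m < L, so it falls below L * u far out\<close>
  define u where "u = t + 1 + \<bar>h s - m * s\<bar> / (L - m)"
  have "t < u" unfolding u_def using \<open>m < L\<close> by (simp add: add_pos_nonneg)
  have "h s + (t - s) / (u - s) * (h u - h s) \<le> h t"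
    using concave_on_chord_le[OF concave, of s u t] assms \<open>t < u\<close> by simp
  then have "(t - s) * (h u - h s) \<le> (h t - h s) * (u - s)"
    using assms \<open>t < u\<close> by (simp add: divide_simps algebra_simps)
  also have "\<dots> = (t - s) * (m * (u - s))" using assms by (simp add: m_def)
  finally have "(t - s) * (h u - h s) \<le> (t - s) * (m * (u - s))" .
  then have "h u - h s \<le> m * (u - s)" using assms by (simp add: mult_le_cancel_left_pos)
  moreover have "L * u \<le> h u" using L_le_ratio \<open>t < u\<close> assms by simp
  ultimately have "(L - m) * u \<le> h s - m * s" by (simp add: algebra_simps)
  moreover have "(L - m) * u = (L - m) * (t + 1) + \<bar>h s - m * s\<bar>"
    unfolding u_def using \<open>m < L\<close> by (simp add: field_simps)
  moreover have "0 < (L - m) * (t + 1)" using \<open>m < L\<close> assms by simp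
  ultimately show False by linarith
qed

lemma in_image_atLeast_1:
  assumes "h 1 \<le> x"
  shows "x \<in> h ` {1..}"
proof -
  define N where "N = max 1 (x / L) + 1"
  have "x \<le> L * N" using L_pos by (simp add: N_def field_simps max_def)
  also have "\<dots> \<le> h N" using L_le_ratio[of N] by (simp add: N_def)
  finally have "x \<le> h N" .
  moreover have "continuous_on {1..N} h"
    using concave_continuous_on_pos by (rule continuous_on_subset) auto
  moreover have "1 \<le> N" by (simp add: N_def)
  ultimately obtain t where "1 \<le> t" "h t = x" using IVT'[of h 1 x N] assms by blast
  then show ?thesis by auto
qed

lemma inv_into_atLeast_1_subadditive:
  defines "g \<equiv> inv_into {1..} h"
  assumes "0 < \<tau>" and u: "\<And>t. u \<le> t \<Longrightarrow> \<tau> * h t \<le> L * t"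
    and "h 1 \<le> B1" "h 1 \<le> B2" "h 1 \<le> S" "h u < S" and diff: "B1 - B2 \<le> \<tau> * S"
  shows "g B1 \<le> g B2 + g S"
proof (rule ccontr)
  have g: "1 \<le> g x" "h (g x) = x" if "h 1 \<le> x" for x
    using inv_into_into[OF in_image_atLeast_1[OF that]] f_inv_into_f[OF in_image_atLeast_1[OF that]]
    by (simp_all add: g_def)
  have gB: "1 \<le> g B1" "h (g B1) = B1" "1 \<le> g B2" "h (g B2) = B2" "1 \<le> g S" "h (g S) = S"
    using g assms by auto
  assume less: "\<not> g B1 \<le> g B2 + g S"
  then have "L * (g B1 - (g B2 + g S)) \<le> h (g B1) - h (g B2 + g S)"
    using increment_ge_slope_at_infinity[of "g B2 + g S" "g B1"] gB by simp
  moreover have "0 < L * (g B1 - (g B2 + g S))" using L_pos less by simp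
  ultimately have "h (g B2 + g S) < B1" using gB by simp
  moreover have "B2 + L * g S \<le> h (g B2 + g S)"
    using increment_ge_slope_at_infinity[of "g B2" "g B2 + g S"] gB by simp
  moreover have "u \<le> g S"
  proof (rule ccontr)
    assume "\<not> u \<le> g S"
    then have "h (g S) \<le> h u" using gB by (intro concave_nonneg_mono) auto
    then show False using gB \<open>h u < S\<close> by simp
  qed
  then have "\<tau> * S \<le> L * g S" using u gB by fastforce
  ultimately show False using diff by simp
qed

lemma large_scale_triangle:
  fixes r U :: "nat \<Rightarrow> real"
  defines "G \<equiv> \<lambda>m n. inv_into {1..} h (cmod (spiral_point r m - spiral_point r n))"
  assumes U: "\<And>n t. U n \<le> t \<Longrightarrow> dist_defect n * h t \<le> L * t" "\<And>n. 0 \<le> U n"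
    and pos: "\<And>n. 0 < r n" and step: "\<And>n. r n \<le> radius_ratio (Suc n) * r (Suc n)"
    and far: "\<And>m n. m < n \<Longrightarrow> h (U n) + h 1 < cmod (spiral_point r m - spiral_point r n)"
    and "i < j" "j < k"
  shows "G i k \<le> G i j + G j k \<and> G i j \<le> G i k + G j k \<and> G j k \<le> G i j + G i k"
proof -
  define D where "D m n = cmod (spiral_point r m - spiral_point r n)" for m n
  have D_sym: "D m n = D n m" for m n by (simp add: D_def norm_minus_commute)
  have "r j \<le> radius_ratio k * r k" using radius_gap_of_increasing[OF pos step \<open>j < k\<close>] .
  also have "\<dots> \<le> radius_ratio j * r k"
    using radius_ratio_antimono[of j k] \<open>j < k\<close> pos[of k] by (intro mult_right_mono) auto
  finally have "\<bar>D k j - D k i\<bar> \<le> dist_defect j * D j i \<and> D j i \<le> D k j \<and> D j i \<le> D k i"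
    using spiral_point_triple[where r = r and a = j and p = k and s = i, OF pos]
      radius_gap_of_increasing[OF pos step \<open>i < j\<close>] \<open>i < j\<close> \<open>j < k\<close>
    by (simp add: D_def)
  then have triple: "\<bar>D i k - D j k\<bar> \<le> dist_defect j * D i j" "D i j \<le> D i k"
    using D_sym by (simp_all add: abs_minus_commute)
  have "h 1 \<le> D m n \<and> h (U n) < D m n" if "m < n" for m n
    using far[OF that] nonneg[OF U(2)[of n]] nonneg[of 1] by (simp add: D_def)
  then have ge: "h 1 \<le> D i j" "h 1 \<le> D i k" "h 1 \<le> D j k" "h (U j) < D i j"
    using \<open>i < j\<close> \<open>j < k\<close> by auto
  note subadd = inv_into_atLeast_1_subadditive[of "dist_defect j" "U j", OF dist_defect_pos U(1)]
  have "G i k \<le> G j k + G i j" "G j k \<le> G i k + G i j"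
    using subadd[of "D i k" "D j k" "D i j"] subadd[of "D j k" "D i k" "D i j"] ge triple
    by (simp_all add: G_def D_def)
  moreover have "G i j \<le> G i k"
  proof -
    have "mono_on {1..} h" by (rule mono_onI) (simp add: concave_nonneg_mono)
    from inv_into_mono_on[OF this in_image_atLeast_1 in_image_atLeast_1]
    show ?thesis using ge triple by (simp add: G_def D_def)
  qed
  moreover have "1 \<le> G j k"
    using inv_into_into[OF in_image_atLeast_1[OF ge(3)]] by (simp add: G_def D_def)
  ultimately show ?thesis by simp
qed

lemma transform_embeds_in_plane_large_scale: "transform_embeds_in_plane h"
proof -
  have "\<exists>u\<ge>0. \<forall>t\<ge>u. dist_defect n * h t \<le> L * t" for n
  proof -
    obtain u where "\<forall>t\<ge>u. dist_defect n * h t \<le> L * t"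
      using L_ratio_limit[OF dist_defect_pos dist_defect_less_1]
      unfolding eventually_at_top_linorder by blast
    then show ?thesis by (intro exI[of _ "max u 0"]) auto
  qed
  then obtain U where U: "\<And>n t. U n \<le> t \<Longrightarrow> dist_defect n * h t \<le> L * t" "\<And>n. 0 \<le> U n"
    by metis
  obtain r where pos: "\<And>n. 0 < r n" and step: "\<And>n. r n \<le> radius_ratio (Suc n) * r (Suc n)"
    and big: "\<And>n. 2 * (h (U n) + h 1) + 2 \<le> r n"
    using ex_increasing_radii[of "\<lambda>n. 2 * (h (U n) + h 1) + 2"] by blast
  have far: "h (U n) + h 1 < cmod (spiral_point r m - spiral_point r n)" if "m < n" for m n
    using spiral_point_dist_of_increasing[OF pos step that] big[of n] by simp
  have inverse: "0 < inv_into {1..} h (cmod (spiral_point r m - spiral_point r n)) \<and>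
      h (inv_into {1..} h (cmod (spiral_point r m - spiral_point r n)))
        = cmod (spiral_point r m - spiral_point r n)" if "m \<noteq> n" for m n
  proof -
    have "h 1 \<le> cmod (spiral_point r m - spiral_point r n)"
      using far[of m n] far[of n m] nonneg[OF U(2)[of m]] nonneg[OF U(2)[of n]] that
      by (cases "m < n") (auto simp: norm_minus_commute)
    note image = in_image_atLeast_1[OF this]
    show ?thesis using inv_into_into[OF image] f_inv_into_f[OF image] by simp
  qed
  show ?thesis
    using zero inverse large_scale_triangle[OF U pos step far]
    by (intro transform_embeds_in_planeI[where g = "inv_into {1..} h" and p = "spiral_point r"])
      simp_all
qed

end

subsection \<open>Small scale\<close>

text \<open>L is the slope of h at 0: the limit and supremum of h t / t as t tends to 0.\<close>

context
  fixes L :: real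
  assumes L_pos: "0 < L"
    and ratio_le_L: "\<And>t. 0 \<le> t \<Longrightarrow> h t \<le> L * t"
    and L_approx: "\<And>\<kappa>. \<kappa> < L \<Longrightarrow> \<exists>u>0. \<kappa> * u < h u"
begin

lemma h_1_pos: "0 < h 1"
proof -
  obtain u where "0 < u" "0 < h u" using L_approx[of 0] L_pos by auto
  show ?thesis
  proof (cases "u \<le> 1")
    case True then show ?thesis using concave_nonneg_mono[of u 1] \<open>0 < u\<close> \<open>0 < h u\<close> by simp
  next
    case False
    have "0 < h u / u" using \<open>0 < u\<close> \<open>0 < h u\<close> by simp
    then show ?thesis using concave_ratio_antimono[of 1 u] False by simp
  qed
qed

lemma increment_gt_near_zero:
  assumes "0 < \<tau>" "\<tau> < 1"
  obtains T where "0 < T"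
    and "\<And>x y. 0 \<le> x \<Longrightarrow> x < y \<Longrightarrow> y \<le> T \<Longrightarrow> \<tau> * L * (y - x) < h y - h x"
proof -
  define \<kappa> where "\<kappa> = (1 + \<tau>) / 2"
  have "\<kappa> * L < L" using assms L_pos by (simp add: \<kappa>_def field_simps)
  then obtain u where "0 < u" "\<kappa> * L * u < h u" using L_approx by blast
  \<comment> \<open>the chord from x to u has slope above \<tau> L as long as x \<le> u / 2\<close>
  have "\<tau> * L * (y - x) < h y - h x" if "0 \<le> x" "x < y" "y \<le> u / 2" for x y
  proof -
    have "0 \<le> (1 - \<tau>) * (u - 2 * x)" using that assms by simp
    then have "\<tau> * (u - x) \<le> \<kappa> * u - x" by (simp add: \<kappa>_def field_simps algebra_simps)
    then have "\<tau> * L * (u - x) \<le> L * (\<kappa> * u - x)" using L_pos by (simp add: mult_left_mono)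
    also have "\<dots> = \<kappa> * L * u - L * x" by (simp add: algebra_simps)
    also have "\<dots> < h u - h x" using \<open>\<kappa> * L * u < h u\<close> ratio_le_L[OF \<open>0 \<le> x\<close>] by simp
    finally have "(y - x) / (u - x) * (\<tau> * L * (u - x)) < (y - x) / (u - x) * (h u - h x)"
      using that \<open>0 < u\<close> by (intro mult_strict_left_mono) auto
    then have "\<tau> * L * (y - x) < (y - x) / (u - x) * (h u - h x)"
      using that by (simp add: mult.commute)
    moreover have "h x + (y - x) / (u - x) * (h u - h x) \<le> h y"
      using concave_on_chord_le[OF concave, of x u y] that by simp
    ultimately show ?thesis by linarith
  qed
  then show ?thesis using that[of "u / 2"] \<open>0 < u\<close> by simp
qed

lemma in_image_greaterThanAtMost_1:
  assumes "0 < x" "x \<le> h 1"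
  shows "x \<in> h ` {0<..1}"
proof -
  define a where "a = min 1 (x / L)"
  have "0 < a" "a \<le> 1" using assms L_pos by (auto simp: a_def)
  have "h a \<le> L * a" using ratio_le_L \<open>0 < a\<close> by simp
  also have "\<dots> \<le> x" using L_pos by (simp add: a_def min_def field_simps)
  finally have "h a \<le> x" .
  moreover have "continuous_on {a..1} h"
    using concave_continuous_on_pos by (rule continuous_on_subset) (use \<open>0 < a\<close> in auto)
  ultimately obtain t where "a \<le> t" "t \<le> 1" "h t = x"
    using IVT'[of h a x 1] assms \<open>a \<le> 1\<close> by blast
  then show ?thesis using \<open>0 < a\<close> by force
qed

lemma inv_into_greaterThanAtMost_1_bounds:
  defines "g \<equiv> inv_into {0<..1} h"
  assumes "0 < x" "x \<le> h 1"
  shows "0 < g x" and "g x \<le> 1" and "h (g x) = x" and "g x * h 1 \<le> x" and "x \<le> L * g x"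
proof -
  note range = in_image_greaterThanAtMost_1[OF assms(2,3)]
  show "0 < g x" "g x \<le> 1" using inv_into_into[OF range] by (auto simp: g_def)
  show "h (g x) = x" using f_inv_into_f[OF range] by (simp add: g_def)
  then show "x \<le> L * g x" using ratio_le_L[of "g x"] \<open>0 < g x\<close> by simp
  have "h 1 / 1 \<le> h (g x) / g x" using concave_ratio_antimono \<open>0 < g x\<close> \<open>g x \<le> 1\<close> by blast
  then show "g x * h 1 \<le> x" using \<open>h (g x) = x\<close> \<open>0 < g x\<close> by (simp add: field_simps)
qed

lemma inv_into_greaterThanAtMost_1_subadditive:
  defines "g \<equiv> inv_into {0<..1} h"
  assumes "0 < \<tau>"
    and T: "\<And>x y. 0 \<le> x \<Longrightarrow> x < y \<Longrightarrow> y \<le> T \<Longrightarrow> \<tau> * L * (y - x) < h y - h x"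
    and B: "0 < B1" "B1 \<le> h 1" "0 < B2" "B2 \<le> h 1" "0 < S" "S \<le> h 1"
    and sum: "B2 + S \<le> T * h 1" and diff: "B1 - B2 \<le> \<tau> * S"
  shows "g B1 \<le> g B2 + g S"
proof (rule ccontr)
  assume less: "\<not> g B1 \<le> g B2 + g S"
  note g1 = inv_into_greaterThanAtMost_1_bounds[OF B(1,2), folded g_def]
    and g2 = inv_into_greaterThanAtMost_1_bounds[OF B(3,4), folded g_def]
    and g3 = inv_into_greaterThanAtMost_1_bounds[OF B(5,6), folded g_def]
  have "(g B2 + g S) * h 1 \<le> T * h 1" using g2(4) g3(4) sum by (simp add: algebra_simps)
  then have "g B2 + g S \<le> T" using h_1_pos by simp
  then have "\<tau> * L * g S < h (g B2 + g S) - B2" using T[of "g B2" "g B2 + g S"] g2 g3 by simp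
  moreover have "h (g B2 + g S) \<le> B1"
    using concave_nonneg_mono[of "g B2 + g S" "g B1"] less g1 g2 g3 by simp
  moreover have "\<tau> * S \<le> \<tau> * (L * g S)" using g3(5) \<open>0 < \<tau>\<close> by simp
  ultimately show False using diff by (simp add: mult.assoc)
qed

lemma small_scale_triangle:
  fixes r T :: "nat \<Rightarrow> real"
  defines "G \<equiv> \<lambda>m n. inv_into {0<..1} h (cmod (spiral_point r m - spiral_point r n))"
  assumes T: "\<And>n x y. 0 \<le> x \<Longrightarrow> x < y \<Longrightarrow> y \<le> T n \<Longrightarrow> dist_defect n * L * (y - x) < h y - h x"
    and pos: "\<And>n. 0 < r n" and step: "\<And>n. r (Suc n) \<le> radius_ratio n * r n"
    and small: "\<And>n. r n \<le> h 1 / 2" "\<And>n. r n \<le> T n * h 1 / 8"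
    and "i < j" "j < k"
  shows "G i k \<le> G i j + G j k \<and> G i j \<le> G i k + G j k \<and> G j k \<le> G i j + G i k"
proof -
  define D where "D m n = cmod (spiral_point r m - spiral_point r n)" for m n
  have "r k \<le> radius_ratio j * r j" using radius_gap_of_decreasing[OF pos step \<open>j < k\<close>] .
  also have "\<dots> \<le> radius_ratio i * r j"
    using radius_ratio_antimono[of i j] \<open>i < j\<close> pos[of j] by (intro mult_right_mono) auto
  finally have triple: "\<bar>D i j - D i k\<bar> \<le> dist_defect i * D j k" "D j k \<le> D i j"
    using spiral_point_triple[where r = r and a = j and p = i and s = k, OF pos]
      radius_gap_of_decreasing[OF pos step \<open>i < j\<close>] \<open>i < j\<close>
    by (simp_all add: D_def norm_minus_commute)
  have "r j \<le> r i"
    using radius_gap_of_decreasing[OF pos step \<open>i < j\<close>] radius_ratio_le[of i] pos[of i]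
      mult_right_mono[of "radius_ratio i" 1 "r i"] by linarith
  then have bounds: "0 < D i j" "D i j \<le> 2 * r i" "0 < D i k" "D i k \<le> 2 * r i"
      "0 < D j k" "D j k \<le> 2 * r i"
    using spiral_point_dist_of_decreasing[OF pos step] \<open>i < j\<close> \<open>j < k\<close>
    by (fastforce simp: D_def)+
  have le: "D i j \<le> h 1" "D i k \<le> h 1" "D j k \<le> h 1"
    "D i j + D j k \<le> T i * h 1" "D i k + D j k \<le> T i * h 1"
    using bounds small[of i] by linarith+
  have diff: "D i k - D i j \<le> dist_defect i * D j k" "D i j - D i k \<le> dist_defect i * D j k"
    using triple(1) by (simp_all add: abs_le_iff)
  note subadd =
    inv_into_greaterThanAtMost_1_subadditive[of "dist_defect i" "T i", OF dist_defect_pos T]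
  have "G i k \<le> G i j + G j k" "G i j \<le> G i k + G j k"
    unfolding G_def D_def[symmetric]
    using subadd[of "D i k" "D i j" "D j k"] subadd[of "D i j" "D i k" "D j k"] bounds le diff
    by simp_all
  moreover have "G j k \<le> G i j"
  proof -
    have "mono_on {0<..1} h" by (rule mono_onI) (simp add: concave_nonneg_mono)
    from inv_into_mono_on[OF this in_image_greaterThanAtMost_1 in_image_greaterThanAtMost_1]
    show ?thesis unfolding G_def D_def[symmetric] using bounds le triple by simp
  qed
  moreover have "0 < G i k"
    unfolding G_def D_def[symmetric] using inv_into_greaterThanAtMost_1_bounds(1) bounds le by simp
  ultimately show ?thesis by simp
qed

lemma transform_embeds_in_plane_small_scale: "transform_embeds_in_plane h"
proof -
  have "\<exists>T>0. \<forall>x y. 0 \<le> x \<longrightarrow> x < y \<longrightarrow> y \<le> T \<longrightarrow> dist_defect n * L * (y - x) < h y - h x"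
    for n using increment_gt_near_zero[OF dist_defect_pos dist_defect_less_1] by metis
  then obtain T where T: "\<And>n. 0 < T n"
    "\<And>n x y. 0 \<le> x \<Longrightarrow> x < y \<Longrightarrow> y \<le> T n \<Longrightarrow> dist_defect n * L * (y - x) < h y - h x"
    by metis
  obtain r where pos: "\<And>n. 0 < r n" and step: "\<And>n. r (Suc n) \<le> radius_ratio n * r n"
    and small: "\<And>n. r n \<le> min (h 1 / 2) (T n * h 1 / 8)"
    using ex_decreasing_radii[of "\<lambda>n. min (h 1 / 2) (T n * h 1 / 8)"] T(1) h_1_pos by auto
  have inverse: "0 < inv_into {0<..1} h (cmod (spiral_point r m - spiral_point r n)) \<and>
      h (inv_into {0<..1} h (cmod (spiral_point r m - spiral_point r n)))
        = cmod (spiral_point r m - spiral_point r n)" if "m \<noteq> n" for m n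
  proof -
    have "0 < cmod (spiral_point r m - spiral_point r n)
        \<and> cmod (spiral_point r m - spiral_point r n) \<le> h 1"
      using spiral_point_dist_of_decreasing[OF pos step, of m n]
        spiral_point_dist_of_decreasing[OF pos step, of n m] small[of m] small[of n] that
      by (cases "m < n") (auto simp: norm_minus_commute)
    then show ?thesis using inv_into_greaterThanAtMost_1_bounds by blast
  qed
  show ?thesis
    using zero inverse small_scale_triangle[OF T(2) pos step] small
    by (intro transform_embeds_in_planeI[where g = "inv_into {0<..1} h" and p = "spiral_point r"])
      simp_all
qed

end

lemma transform_embeds_in_plane_of_ratio_bounded:
  assumes bounded: "\<And>t. 0 < t \<Longrightarrow> h t / t \<le> M" and "0 < h 1"
  shows "transform_embeds_in_plane h"
proof -
  define L where "L = Sup ((\<lambda>t. h t / t) ` {0<..})"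
  have bdd: "bdd_above ((\<lambda>t. h t / t) ` {0<..})" using bounded by (auto simp: bdd_above_def)
  have ratio_le: "h t / t \<le> L" if "0 < t" for t
    unfolding L_def using that bdd by (intro cSup_upper) auto
  have "0 < L" using ratio_le[of 1] \<open>0 < h 1\<close> by simp
  moreover have "h t \<le> L * t" if "0 \<le> t" for t
    using ratio_le[of t] that zero by (cases "t = 0") (auto simp: field_simps)
  moreover have "\<exists>u>0. \<kappa> * u < h u" if "\<kappa> < L" for \<kappa>
  proof -
    obtain u where "0 < u" "\<kappa> < h u / u"
      using \<open>\<kappa> < L\<close> less_cSup_iff[OF _ bdd] unfolding L_def by auto
    then show ?thesis by (auto simp: field_simps)
  qed
  ultimately show ?thesis by (rule transform_embeds_in_plane_small_scale)
qed

lemma transform_embeds_in_plane_of_ratio_bounded_below: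
  assumes "0 < e" and bounded: "\<And>t. 0 < t \<Longrightarrow> e \<le> h t / t"
  shows "transform_embeds_in_plane h"
proof -
  define L where "L = Inf ((\<lambda>t. h t / t) ` {0<..})"
  have bdd: "bdd_below ((\<lambda>t. h t / t) ` {0<..})" using bounded by (auto simp: bdd_below_def)
  have ratio_ge: "L \<le> h t / t" if "0 < t" for t
    unfolding L_def using that bdd by (intro cInf_lower) auto
  have "e \<le> L" unfolding L_def using bounded by (intro cInf_greatest) auto
  then have "0 < L" using \<open>0 < e\<close> by simp
  moreover have "L * t \<le> h t" if "0 < t" for t using ratio_ge[OF that] that by (simp add: field_simps)
  moreover have "\<forall>\<^sub>F t in at_top. \<tau> * h t \<le> L * t" if "0 < \<tau>" "\<tau> < 1" for \<tau>
  proof -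
    have "L < L / \<tau>" using that \<open>0 < L\<close> by (simp add: field_simps)
    then obtain t\<^sub>0 where "0 < t\<^sub>0" "h t\<^sub>0 / t\<^sub>0 < L / \<tau>"
      using cInf_less_iff[OF _ bdd] unfolding L_def by auto
    moreover have "h t / t \<le> h t\<^sub>0 / t\<^sub>0" if "t\<^sub>0 \<le> t" for t
      using concave_ratio_antimono \<open>0 < t\<^sub>0\<close> that by blast
    ultimately have ratio_less: "h t / t < L / \<tau>" if "t\<^sub>0 \<le> t" for t using that by fastforce
    have "\<tau> * h t < L * t" if "t\<^sub>0 \<le> t" for t
    proof -
      have "h t < L / \<tau> * t"
        using ratio_less[OF that] that \<open>0 < t\<^sub>0\<close> by (simp add: pos_divide_less_eq)
      from mult_strict_left_mono[OF this \<open>0 < \<tau>\<close>] show ?thesis using \<open>0 < \<tau>\<close> by simp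
    qed
    then show ?thesis unfolding eventually_at_top_linorder by (blast intro: less_imp_le)
  qed
  ultimately show ?thesis by (rule transform_embeds_in_plane_large_scale)
qed

lemma ratio_bounded_of_not_tendsto_at_top:
  assumes "\<not> filterlim (\<lambda>t. h t / t) at_top (at_right 0)"
  obtains M where "\<And>t. 0 < t \<Longrightarrow> h t / t \<le> M"
proof -
  have "\<exists>M. \<forall>t. 0 < t \<longrightarrow> h t / t \<le> M"
  proof (rule ccontr)
    assume "\<nexists>M. \<forall>t. 0 < t \<longrightarrow> h t / t \<le> M"
    then have large: "\<exists>t>0. Z < h t / t" for Z by (meson not_le)
    have "filterlim (\<lambda>t. h t / t) at_top (at_right 0)"
      unfolding filterlim_at_top
    proof
      fix Z :: real
      obtain t where "0 < t" "Z < h t / t" using large by blast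
      then show "\<forall>\<^sub>F s in at_right 0. Z \<le> h s / s"
        unfolding eventually_at_right_field
      proof (intro exI[of _ t] conjI allI impI)
        fix s assume "0 < s" "s < t"
        then show "Z \<le> h s / s" using concave_ratio_antimono[of s t] \<open>Z < h t / t\<close> by simp
      qed (rule \<open>0 < t\<close>)
    qed
    with assms show False by simp
  qed
  with that show thesis by blast
qed

lemma ratio_bounded_below_of_not_tendsto_0:
  assumes "\<not> ((\<lambda>t. h t / t) \<longlongrightarrow> 0) at_top"
  obtains e where "0 < e" and "\<And>t. 0 < t \<Longrightarrow> e \<le> h t / t"
proof -
  have "\<exists>e. 0 < e \<and> (\<forall>t. 0 < t \<longrightarrow> e \<le> h t / t)"
  proof (rule ccontr)
    assume "\<nexists>e. 0 < e \<and> (\<forall>t. 0 < t \<longrightarrow> e \<le> h t / t)"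
    then have small: "\<exists>t>0. h t / t < e" if "0 < e" for e using that by (meson not_le)
    have "((\<lambda>t. h t / t) \<longlongrightarrow> 0) at_top"
    proof (rule order_tendstoI)
      fix e :: real assume "e < 0"
      have "e < h t / t" if "0 < t" for t
        using divide_nonneg_pos[OF nonneg[OF less_imp_le[OF that]] that] \<open>e < 0\<close> by simp
      from eventually_mono[OF eventually_gt_at_top[of "0::real"] this]
      show "\<forall>\<^sub>F t in at_top. e < h t / t" .
    next
      fix e :: real assume "0 < e"
      then obtain t\<^sub>0 where "0 < t\<^sub>0" "h t\<^sub>0 / t\<^sub>0 < e" using small by blast
      then show "\<forall>\<^sub>F t in at_top. h t / t < e"
        unfolding eventually_at_top_linorder
      proof (intro exI[of _ t\<^sub>0] allI impI)
        fix t assume "t\<^sub>0 \<le> t"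
        then show "h t / t < e"
          using concave_ratio_antimono[of t\<^sub>0 t] \<open>0 < t\<^sub>0\<close> \<open>h t\<^sub>0 / t\<^sub>0 < e\<close> by simp
      qed
    qed
    with assms show False by simp
  qed
  with that show thesis by blast
qed

end

theorem proposition3p4:
  fixes h :: "real \<Rightarrow> real"
  assumes h_nonneg: "\<And>t. t \<ge> 0 \<Longrightarrow> h t \<ge> 0"
    and h_zero: "h 0 = 0"
    and h_concave: "concave_on {0..} h"
    and h_growth: "\<not> filterlim (\<lambda>t. h t / t) at_top (at_right 0)
                   \<or> \<not> ((\<lambda>t. h t / t) \<longlongrightarrow> 0) at_top"
  shows "\<exists>(X :: nat set) (d :: nat \<Rightarrow> nat \<Rightarrow> real).
           infinite X \<and> Metric_space X d \<and>
           (\<exists>f :: nat \<Rightarrow> real^2. \<forall>x\<in>X. \<forall>y\<in>X. dist (f x) (f y) = h (d x y))"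
proof -
  note h = h_nonneg h_zero h_concave
  have "transform_embeds_in_plane h"
  proof (cases "h 1 = 0")
    case True
    with h_zero show ?thesis by (rule transform_embeds_in_plane_degenerate)
  next
    case False
    then have "0 < h 1" using h_nonneg[of 1] by simp
    from h_growth show ?thesis
    proof
      assume "\<not> filterlim (\<lambda>t. h t / t) at_top (at_right 0)"
      then obtain M where "\<And>t. 0 < t \<Longrightarrow> h t / t \<le> M"
        using ratio_bounded_of_not_tendsto_at_top[OF h] by blast
      then show ?thesis using transform_embeds_in_plane_of_ratio_bounded[OF h] \<open>0 < h 1\<close> by blast
    next
      assume "\<not> ((\<lambda>t. h t / t) \<longlongrightarrow> 0) at_top"
      then obtain e where "0 < e" "\<And>t. 0 < t \<Longrightarrow> e \<le> h t / t"
        using ratio_bounded_below_of_not_tendsto_0[OF h] by blast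
      then show ?thesis using transform_embeds_in_plane_of_ratio_bounded_below[OF h] by blast
    qed
  qed
  then show ?thesis unfolding transform_embeds_in_plane_def .
qed

end
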